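(* Let $G$ be a graph with $V(G)=[n]$, without isolated vertices, and let $I=[n]\setminus[n-i]$ be an independent set of $G$ (for some $i\ge 0$); write $\overline{S}=[n]\setminus S$. Order the facets of $\mathcal{NC}(G)$ by $\prec$ as defined in the context. If $\sigma,\sigma'\in\mathcal{NC}(G)$ satisfy $\overline{\sigma}\cap\overline{I}=\overline{\sigma'}\cap\overline{I}$ and the induced subgraph $G[\overline{\sigma}\cap\overline{I}]$ contains an edge, then $\mathrm{mes}_{\prec}(\sigma)=\mathrm{mes}_{\prec}(\sigma')$.
   Context: $\mathcal{NC}(G)$ is the simplicial complex on $V(G)$ whose faces are the sets $W\subseteq V(G)$ such that $V(G)\setminus W$ contains both endpoints of some edge. Its facets are exactly the sets $[n]\setminus\{a,b\}$ for edges $ab\in E(G)$. For edges $a_1b_1,a_2b_2$ with $a_j<b_j$, write $a_1b_1<_L a_2b_2$ if $b_1<b_2$, or $b_1=b_2$ and $a_1<a_2$. For distinct facets $\sigma,\tau$, set $\sigma\prec\tau$ iff $\overline{\sigma}<_L\overline{\tau}$; this gives a linear order $\sigma_1,\dots,\sigma_m$ of the facets. Minimal exclusion sequence: for a face $\sigma$, let $i$ be the smallest index with $\sigma\subseteq\sigma_i$. If $i=1$, $\mathrm{mes}_\prec(\sigma)$ is the empty sequence; otherwise $\mathrm{mes}_\prec(\sigma)=(v_1,\dots,v_{i-1})$ where $v_1=\min(\sigma\setminus\sigma_1)$ and for $2\le k\le i-1$, $v_k=\min(\{v_1,\dots,v_{k-1}\}\cap(\sigma\setminus\sigma_k))$ if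 this intersection is nonempty, and $v_k=\min(\sigma\setminus\sigma_k)$ otherwise (minima taken in the natural order of $[n]$). *)

theory Defs
  imports Main "HOL-Library.Product_Lexorder"
begin

definition simple_graph :: "nat \<Rightarrow> nat set set \<Rightarrow> bool" where
  "simple_graph n E \<longleftrightarrow> (\<forall>e\<in>E. e \<subseteq> {1..n} \<and> card e = 2)"

definition no_isolated :: "nat \<Rightarrow> nat set set \<Rightarrow> bool" where
  "no_isolated n E \<longleftrightarrow> (\<forall>v\<in>{1..n}. \<exists>e\<in>E. v \<in> e)"

definition independent :: "nat set set \<Rightarrow> nat set \<Rightarrow> bool" where
  "independent E S \<longleftrightarrow> \<not> (\<exists>e\<in>E. e \<subseteq> S)"

definition NC :: "nat \<Rightarrow> nat set set \<Rightarrow> nat set set" where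
  "NC n E = {W. W \<subseteq> {1..n} \<and> (\<exists>e\<in>E. e \<subseteq> {1..n} - W)}"

text \<open>Edges ab (a<b) encoded as (b,a); lexicographic order on these pairs is exactly <_L.\<close>
definition edge_keys :: "nat set set \<Rightarrow> (nat \<times> nat) list" where
  "edge_keys E = sorted_list_of_set {(b, a). a < b \<and> {a, b} \<in> E}"

definition facets_list :: "nat \<Rightarrow> nat set set \<Rightarrow> nat set list" where
  "facets_list n E = map (\<lambda>(b, a). {1..n} - {a, b}) (edge_keys E)"

fun mes_aux :: "nat set \<Rightarrow> nat set list \<Rightarrow> nat list \<Rightarrow> nat list" where
  "mes_aux \<sigma> [] vs = vs"
| "mes_aux \<sigma> (F # Fs) vs =
     (let C = set vs \<inter> (\<sigma> - F);
          v = (if C \<noteq> {} then Min C else Min (\<sigma> - F))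
      in mes_aux \<sigma> Fs (vs @ [v]))"

text \<open>Minimal exclusion sequence. With 0-based list index j of the first facet containing
  sigma (i.e. i = j+1), the sequence is (v_1,...,v_j) computed from facets sigma_1..sigma_j.\<close>
definition mes :: "nat \<Rightarrow> nat set set \<Rightarrow> nat set \<Rightarrow> nat list" where
  "mes n E \<sigma> =
     (let Fs = facets_list n E;
          j = (LEAST j. j < length Fs \<and> \<sigma> \<subseteq> Fs ! j)
      in mes_aux \<sigma> (take j Fs) [])"

end

theory Submission
  imports Defs
begin

text \<open>The exclusion sequence of \<open>\<sigma>\<close> depends only on the sets \<open>\<sigma> - \<sigma>\<^sub>k\<close> for the facets \<open>\<sigma>\<^sub>k\<close>
  up to the first facet containing \<open>\<sigma>\<close>. An edge \<open>ab\<close>, \<open>a < b\<close>, avoiding \<open>\<sigma>\<close> and \<open>I\<close> gives a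
  facet \<open>[n] - {a,b}\<close> containing \<open>\<sigma>\<close>, and every facet up to it in the order \<open>\<prec>\<close> misses an edge
  inside \<open>[b] \<subseteq> [n - i]\<close>. On \<open>[n - i]\<close> the faces \<open>\<sigma>\<close> and \<open>\<sigma>'\<close> agree, so both sequences are
  computed from the same data.\<close>

lemma mes_aux_cong:
  assumes "\<forall>F\<in>set Fs. \<sigma> - F = \<sigma>' - F"
  shows "mes_aux \<sigma> Fs vs = mes_aux \<sigma>' Fs vs"
  using assms by (induction Fs arbitrary: vs) (auto simp: Let_def)

lemma Least_cong_upto:
  fixes j :: nat
  assumes "P j" and "\<And>k. k \<le> j \<Longrightarrow> P k \<longleftrightarrow> Q k"
  shows "Least P = Least Q"
proof (rule Least_equality[symmetric])
  have le: "Least P \<le> j" using assms(1) by (rule Least_le)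
  have "P (Least P)" using assms(1) by (rule LeastI)
  with assms(2)[OF le] show "Q (Least P)" ..
next
  fix k assume "Q k"
  show "Least P \<le> k"
  proof (cases "k \<le> j")
    case True
    then have "P k" using \<open>Q k\<close> assms(2) by blast
    then show ?thesis by (rule Least_le)
  next
    case False
    then show ?thesis using Least_le[of P j, OF assms(1)] by simp
  qed
qed

lemma mes_eq_if_agree_upto:
  assumes "j < length (facets_list n E)" and "\<sigma> \<subseteq> facets_list n E ! j"
    and "\<And>k. k \<le> j \<Longrightarrow> \<sigma> - facets_list n E ! k = \<sigma>' - facets_list n E ! k"
  shows "mes n E \<sigma> = mes n E \<sigma>'"
proof -
  let ?Fs = "facets_list n E"
  let ?P = "\<lambda>j. j < length ?Fs \<and> \<sigma> \<subseteq> ?Fs ! j"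
  let ?Q = "\<lambda>j. j < length ?Fs \<and> \<sigma>' \<subseteq> ?Fs ! j"
  have first_eq: "Least ?P = Least ?Q"
  proof (rule Least_cong_upto[of ?P j])
    show "?P j" using assms(1,2) ..
    fix k assume "k \<le> j"
    then show "?P k \<longleftrightarrow> ?Q k"
      using assms(1) assms(3)[of k] by (metis Diff_eq_empty_iff le_less_trans)
  qed
  have "Least ?P \<le> j" using assms(1,2) by (intro Least_le) simp
  have "\<forall>F\<in>set (take (Least ?P) ?Fs). \<sigma> - F = \<sigma>' - F"
  proof
    fix F assume "F \<in> set (take (Least ?P) ?Fs)"
    then obtain k where "k < Least ?P" "F = ?Fs ! k" by (auto simp: in_set_conv_nth)
    with \<open>Least ?P \<le> j\<close> show "\<sigma> - F = \<sigma>' - F" using assms(3)[of k] by simp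
  qed
  then show ?thesis
    unfolding mes_def Let_def first_eq[symmetric] by (rule mes_aux_cong)
qed

lemma set_edge_keys:
  assumes "simple_graph n E"
  shows "set (edge_keys E) = {(b, a). a < b \<and> {a, b} \<in> E}"
proof -
  have "{(b, a). a < b \<and> {a, b} \<in> E} \<subseteq> {1..n} \<times> {1..n}"
    using assms by (auto simp: simple_graph_def)
  then have "finite {(b, a). a < b \<and> {a, b} \<in> E}" by (rule finite_subset) simp
  then show ?thesis unfolding edge_keys_def by simp
qed

lemma length_facets_list: "length (facets_list n E) = length (edge_keys E)"
  by (simp add: facets_list_def)

lemma nth_facets_list:
  assumes "k < length (edge_keys E)" and "edge_keys E ! k = (b, a)"
  shows "facets_list n E ! k = {1..n} - {a, b}"
  using assms by (simp add: facets_list_def)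

text \<open>This is where the order \<open><\<^sub>L\<close> enters: edges are sorted by their larger endpoint first.\<close>
lemma facet_complement_before:
  assumes "simple_graph n E" and "k \<le> j" and "j < length (edge_keys E)"
    and "edge_keys E ! j = (b, a)"
  shows "{1..n} - facets_list n E ! k \<subseteq> {1..b}"
proof -
  obtain b' a' where key: "edge_keys E ! k = (b', a')" by fastforce
  have "k < length (edge_keys E)" using assms by simp
  then have "(b', a') \<in> set (edge_keys E)" using key by (metis nth_mem)
  then have edge: "a' < b'" "{a', b'} \<subseteq> {1..n}"
    using assms(1) by (auto simp: set_edge_keys[OF assms(1)] simple_graph_def)
  have "edge_keys E ! k \<le> edge_keys E ! j"
    using assms(2,3) by (simp add: edge_keys_def sorted_nth_mono)
  then have "b' \<le> b" using key assms(4) by (auto simp: less_eq_prod_def)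
  then have "{a', b'} \<subseteq> {1..b}" using edge by auto
  moreover have "{1..n} - facets_list n E ! k = {a', b'}"
    using nth_facets_list[OF \<open>k < length (edge_keys E)\<close> key] edge(2)
    by (simp add: Diff_Diff_Int Int_absorb1 Int_absorb2)
  ultimately show ?thesis by simp
qed

lemma obtain_ordered_doubleton:
  fixes x y :: "'a::linorder"
  assumes "x \<noteq> y"
  obtains a b where "{x, y} = {a, b}" and "a < b"
proof (cases "x < y")
  case True
  with that show ?thesis by blast
next
  case False
  with assms have "y < x" by simp
  with that[of y x] show ?thesis by (simp add: insert_commute)
qed

theorem claim2p2:
  fixes n i :: nat and E :: "nat set set" and \<sigma> \<sigma>' :: "nat set"
  assumes "simple_graph n E"
    and "no_isolated n E"
    and "independent E ({1..n} - {1..n - i})"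
    and "\<sigma> \<in> NC n E" and "\<sigma>' \<in> NC n E"
    and "({1..n} - \<sigma>) \<inter> ({1..n} - ({1..n} - {1..n - i}))
         = ({1..n} - \<sigma>') \<inter> ({1..n} - ({1..n} - {1..n - i}))"
    and "\<exists>e\<in>E. e \<subseteq> ({1..n} - \<sigma>) \<inter> ({1..n} - ({1..n} - {1..n - i}))"
  shows "mes n E \<sigma> = mes n E \<sigma>'"
proof -
  have co_I: "{1..n} - ({1..n} - {1..n - i}) = {1..n - i}" by auto
  have faces: "\<sigma> \<subseteq> {1..n}" "\<sigma>' \<subseteq> {1..n}" using assms(4,5) by (auto simp: NC_def)
  with assms(6) have agree: "\<sigma> \<inter> {1..n - i} = \<sigma>' \<inter> {1..n - i}" unfolding co_I by blast
  obtain e where e: "e \<in> E" "e \<subseteq> ({1..n} - \<sigma>) \<inter> {1..n - i}" using assms(7) co_I by auto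
  obtain x y where "e = {x, y}" "x \<noteq> y"
    using assms(1) e(1) by (auto simp: simple_graph_def card_2_iff)
  then obtain a b where ab: "e = {a, b}" "a < b" by (metis obtain_ordered_doubleton)
  with e(1) have "(b, a) \<in> set (edge_keys E)" using set_edge_keys[OF assms(1)] by auto
  then obtain j where j: "j < length (edge_keys E)" "edge_keys E ! j = (b, a)"
    by (auto simp: in_set_conv_nth)
  show ?thesis
  proof (rule mes_eq_if_agree_upto)
    show "j < length (facets_list n E)" using j by (simp add: length_facets_list)
    show "\<sigma> \<subseteq> facets_list n E ! j" using nth_facets_list[OF j] e(2) ab faces by blast
    fix k assume "k \<le> j"
    have "b \<le> n - i" using e(2) ab by auto
    then have "{1..n} - facets_list n E ! k \<subseteq> {1..n - i}"
      using facet_complement_before[OF assms(1) \<open>k \<le> j\<close> j] by auto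
    with agree faces show "\<sigma> - facets_list n E ! k = \<sigma>' - facets_list n E ! k" by blast
  qed
qed

end
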